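(* Suppose the neighbor graph $\mathbb N$ (with $m\ge 2$ vertices, no self-arcs) is strongly connected and let $\mathrm D=\{\mathbb E_0,\dots,\mathbb E_p\}$ be an ear decomposition of $\mathbb N$. If for each ear $\mathbb E\in\mathrm D$ the indexed family of subspaces $\{\mathcal K_{ji}:(j,i)\text{ an arc of }\mathbb E\}$ is independent, where $\mathcal K_{ji}=\ker C_{ji}$, then $\bar{\mathbb N}$ is well-configured.
   Context: Setup: there are $m$ agents labeled $1,\dots,m$, each with state $x_i\in\mathbb R^n$. The neighbor graph $\mathbb N$ is a directed graph on vertex set $\{1,\dots,m\}$ without self-arcs; every arc $(j,i)$ is assigned a real matrix $C_{ji}$ with $n$ columns (any number of rows), and $\bar{\mathbb N}$ denotes $\mathbb N$ together with these matrices. $\bar{\mathbb N}$ is called well-configured if for all $x_1,\dots,x_m\in\mathbb R^n$, the conditions $C_{ji}x_i=C_{ji}x_j$ for every arc $(j,i)$ imply $x_1=\cdots=x_m$. A finite indexed family of subspaces $\{\mathcal S_1,\dots,\mathcal S_p\}$ of $\mathbb R^n$ is independent if $\mathcal S_i\cap\sum_{j\ne i}\mathcal S_j=0$ for every $i$. A directed path is a subgraph with distinct vertices $v_0,\dots,v_k$ ($k\ge1$) and arcs $(v_{r-1},v_r)$, $r=1,\dots,k$; its end-vertices are $v_0,v_k$. A directed cycle is a subgraph with distinct vertices $v_1,\dots,v_k$ ($k\ge 2$) and arcs $(v_r,v_{r+1})$, $r<k$, and $(v_k,v_1)$. An ear decomposition of a directed graph $\mathbb G$ (no self-arcs, at least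 two vertices) is a sequence of subgraphs $\mathbb E_0,\dots,\mathbb E_p$ such that $\mathbb E_0$ is a directed cycle, each $\mathbb E_i$ ($i\ge1$) is a directed path or directed cycle, the $\mathbb E_i$ are pairwise arc-disjoint with union $\mathbb G$, and for each $i\ge 1$: if $\mathbb E_i$ is a directed cycle it has exactly one vertex in common with $\bigcup_{k<i}\mathbb E_k$, and if it is a directed path its two end-vertices are the only vertices it has in common with $\bigcup_{k<i}\mathbb E_k$. The sets $\mathbb E_i$ are called ears. *)

theory Defs
  imports "HOL-Analysis.Analysis"
begin

text \<open>A real matrix with n columns and any number of rows is represented by the
list of its rows, each row a vector in real^'n.\<close>
type_synonym 'n mat_rows = "(real ^ 'n) list"

definition mat_apply :: "'n::finite mat_rows \<Rightarrow> real ^ 'n \<Rightarrow> real list" where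
  "mat_apply M x = map (\<lambda>r. r \<bullet> x) M"

definition mat_ker :: "'n::finite mat_rows \<Rightarrow> (real ^ 'n) set" where
  "mat_ker M = {x. mat_apply M x = map (\<lambda>_. 0) M}"

text \<open>Graph: vertex set {1..m}, arc set A. A subgraph is a pair (vertices, arcs).\<close>

definition path_arcs :: "nat list \<Rightarrow> (nat \<times> nat) set" where
  "path_arcs vs = {(vs ! (r - 1), vs ! r) | r. 1 \<le> r \<and> r < length vs}"

definition is_dpath_list :: "nat set \<times> (nat \<times> nat) set \<Rightarrow> nat list \<Rightarrow> bool" where
  "is_dpath_list E vs \<longleftrightarrow> distinct vs \<and> length vs \<ge> 2 \<and>
     fst E = set vs \<and> snd E = path_arcs vs"

definition is_dpath :: "nat set \<times> (nat \<times> nat) set \<Rightarrow> bool" where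
  "is_dpath E \<longleftrightarrow> (\<exists>vs. is_dpath_list E vs)"

definition is_dcycle :: "nat set \<times> (nat \<times> nat) set \<Rightarrow> bool" where
  "is_dcycle E \<longleftrightarrow> (\<exists>vs. distinct vs \<and> length vs \<ge> 2 \<and>
     fst E = set vs \<and> snd E = path_arcs vs \<union> {(last vs, hd vs)})"

definition ear_decomposition ::
  "nat set \<Rightarrow> (nat \<times> nat) set \<Rightarrow> (nat set \<times> (nat \<times> nat) set) list \<Rightarrow> bool" where
  "ear_decomposition V A Es \<longleftrightarrow>
     Es \<noteq> [] \<and> is_dcycle (Es ! 0) \<and>
     (\<forall>i < length Es. i \<ge> 1 \<longrightarrow> is_dpath (Es ! i) \<or> is_dcycle (Es ! i)) \<and>
     (\<forall>i < length Es. \<forall>k < length Es. i \<noteq> k \<longrightarrow> snd (Es ! i) \<inter> snd (Es ! k) = {}) \<and>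
     (\<Union>i < length Es. fst (Es ! i)) = V \<and>
     (\<Union>i < length Es. snd (Es ! i)) = A \<and>
     (\<forall>i < length Es. i \<ge> 1 \<longrightarrow>
        (is_dcycle (Es ! i) \<longrightarrow> card (fst (Es ! i) \<inter> (\<Union>k < i. fst (Es ! k))) = 1) \<and>
        (\<forall>vs. is_dpath_list (Es ! i) vs \<longrightarrow>
             fst (Es ! i) \<inter> (\<Union>k < i. fst (Es ! k)) = {hd vs, last vs}))"

definition independent_family :: "'i set \<Rightarrow> ('i \<Rightarrow> (real ^ 'n::finite) set) \<Rightarrow> bool" where
  "independent_family I S \<longleftrightarrow>
     (\<forall>a\<in>I. S a \<inter> span (\<Union>b \<in> I - {a}. S b) = {0})"

definition strongly_connected :: "nat set \<Rightarrow> (nat \<times> nat) set \<Rightarrow> bool" where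
  "strongly_connected V A \<longleftrightarrow> (\<forall>u\<in>V. \<forall>v\<in>V. (u, v) \<in> A\<^sup>*)"

definition well_configured ::
  "nat \<Rightarrow> (nat \<times> nat) set \<Rightarrow> (nat \<times> nat \<Rightarrow> 'n::finite mat_rows) \<Rightarrow> bool" where
  "well_configured m A C \<longleftrightarrow>
     (\<forall>x :: nat \<Rightarrow> real ^ 'n.
        (\<forall>(j, i) \<in> A. mat_apply (C (j, i)) (x i) = mat_apply (C (j, i)) (x j)) \<longrightarrow>
        (\<forall>i\<in>{1..m}. \<forall>j\<in>{1..m}. x i = x j))"

end

theory Submission
  imports Defs
begin

text \<open>Along every arc \<open>(j, i)\<close> the difference \<open>x i - x j\<close> lies in \<open>ker C\<^sub>j\<^sub>i\<close>. On a cycle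
ear these differences telescope to \<open>0\<close>; on a path ear they telescope to the difference of
the end values, which is \<open>0\<close> once \<open>x\<close> is known to be constant on the earlier ears. A zero
sum of vectors taken from independent subspaces has all summands zero, so \<open>x\<close> is constant
on each ear, and induction along the ear decomposition makes it constant everywhere.\<close>

lemma independent_family_sum_eq_0:
  assumes "finite I" "independent_family I S" "\<forall>b\<in>I. d b \<in> S b" "sum d I = 0" "a \<in> I"
  shows "d a = 0"
proof -
  have "d a = - sum d (I - {a})"
    using sum.remove[OF assms(1,5), of d] assms(4) by (simp add: eq_neg_iff_add_eq_0)
  moreover have "sum d (I - {a}) \<in> span (\<Union>b \<in> I - {a}. S b)"
    by (rule span_sum) (use assms(3) in \<open>auto intro: span_base\<close>)
  ultimately have "d a \<in> span (\<Union>b \<in> I - {a}. S b)"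
    by (metis span_neg)
  with assms(2,3,5) show ?thesis
    unfolding independent_family_def by blast
qed

lemma mat_apply_eq_imp_diff_in_mat_ker:
  "mat_apply M u = mat_apply M v \<Longrightarrow> u - v \<in> mat_ker M"
  unfolding mat_ker_def mat_apply_def by (simp add: map_eq_conv inner_diff_right)

lemma path_arcs_eq_image: "path_arcs vs = (\<lambda>r. (vs ! (r - 1), vs ! r)) ` {1..<length vs}"
  by (auto simp: path_arcs_def)

lemma finite_path_arcs: "finite (path_arcs vs)"
  unfolding path_arcs_eq_image by simp

lemma sum_path_arcs_telescope:
  fixes x :: "nat \<Rightarrow> 'a::ab_group_add"
  assumes "distinct vs" "length vs \<ge> 2"
  shows "(\<Sum>(j, i)\<in>path_arcs vs. x i - x j) = x (last vs) - x (hd vs)"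
proof -
  have inj: "inj_on (\<lambda>r. (vs ! (r - 1), vs ! r)) {1..<length vs}"
    using assms(1) by (auto simp: inj_on_def nth_eq_iff_index_eq)
  have "(\<Sum>(j, i)\<in>path_arcs vs. x i - x j) = (\<Sum>r\<in>{1..<length vs}. x (vs ! r) - x (vs ! (r - 1)))"
    unfolding path_arcs_eq_image by (subst sum.reindex[OF inj]) simp
  also have "\<dots> = (\<Sum>r<length vs - 1. x (vs ! Suc r) - x (vs ! r))"
    using assms(2) by (intro sum.reindex_bij_witness[of _ Suc "\<lambda>r. r - 1"]) auto
  also have "\<dots> = x (vs ! (length vs - 1)) - x (vs ! 0)"
    by (rule sum_lessThan_telescope)
  also have "\<dots> = x (last vs) - x (hd vs)"
    using assms(2) by (cases vs) (auto simp: last_conv_nth)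
  finally show ?thesis .
qed

lemma closing_arc_notin_path_arcs:
  assumes "distinct vs" "length vs \<ge> 2"
  shows "(last vs, hd vs) \<notin> path_arcs vs"
proof
  assume "(last vs, hd vs) \<in> path_arcs vs"
  then obtain r where "1 \<le> r" "r < length vs" "vs ! r = hd vs"
    by (auto simp: path_arcs_def)
  moreover have "hd vs = vs ! 0"
    using assms(2) by (cases vs) auto
  ultimately have "vs ! r = vs ! 0"
    by simp
  with \<open>r < length vs\<close> \<open>1 \<le> r\<close> assms(1) show False
    by (subst (asm) nth_eq_iff_index_eq) auto
qed

lemma constant_along_path_arcs:
  assumes "\<forall>(j, i)\<in>path_arcs vs. x i = x j" "v \<in> set vs"
  shows "x v = x (hd vs)"
proof -
  have "x (vs ! r) = x (vs ! 0)" if "r < length vs" for r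
    using that
  proof (induction r)
    case (Suc r)
    have "(vs ! (Suc r - 1), vs ! Suc r) \<in> path_arcs vs"
      using Suc.prems unfolding path_arcs_eq_image by (intro imageI) simp
    with assms(1) Suc show ?case by auto
  qed simp
  moreover obtain r where "r < length vs" "v = vs ! r"
    using assms(2) by (auto simp: in_set_conv_nth)
  moreover have "hd vs = vs ! 0"
    using assms(2) by (cases vs) auto
  ultimately show ?thesis
    by simp
qed

lemma constant_on_independent_arcs:
  fixes x :: "nat \<Rightarrow> real ^ 'n::finite"
  assumes "finite F" "independent_family F (\<lambda>a. mat_ker (C a))"
    and "\<forall>(j, i)\<in>F. x i - x j \<in> mat_ker (C (j, i))"
    and "(\<Sum>(j, i)\<in>F. x i - x j) = 0"
    and "path_arcs vs \<subseteq> F" "v \<in> set vs"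
  shows "x v = x (hd vs)"
proof (rule constant_along_path_arcs[OF _ assms(6)], clarify)
  fix j i assume "(j, i) \<in> path_arcs vs"
  then have "(\<lambda>(j, i). x i - x j) (j, i) = 0"
    using assms(5) by (intro independent_family_sum_eq_0[OF assms(1,2) _ assms(4)]) (use assms(3) in auto)
  then show "x i = x j" by simp
qed

lemma constant_on_dcycle:
  fixes x :: "nat \<Rightarrow> real ^ 'n::finite"
  assumes "is_dcycle E" "independent_family (snd E) (\<lambda>a. mat_ker (C a))"
    and "\<forall>(j, i)\<in>snd E. x i - x j \<in> mat_ker (C (j, i))"
  shows "\<forall>u\<in>fst E. \<forall>v\<in>fst E. x u = x v"
proof -
  obtain vs where vs: "distinct vs" "length vs \<ge> 2" "fst E = set vs"
    and arcs: "snd E = insert (last vs, hd vs) (path_arcs vs)"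
    using assms(1) unfolding is_dcycle_def by auto
  have "(\<Sum>(j, i)\<in>snd E. x i - x j) = 0"
    unfolding arcs using closing_arc_notin_path_arcs[OF vs(1,2)]
    by (simp add: finite_path_arcs sum_path_arcs_telescope[OF vs(1,2)])
  then have "\<forall>v\<in>fst E. x v = x (hd vs)"
    using constant_on_independent_arcs[OF _ assms(2,3)] vs(3) arcs
    by (auto simp: finite_path_arcs)
  then show ?thesis by metis
qed

lemma constant_on_dpath:
  fixes x :: "nat \<Rightarrow> real ^ 'n::finite"
  assumes "is_dpath_list E vs" "independent_family (snd E) (\<lambda>a. mat_ker (C a))"
    and "\<forall>(j, i)\<in>snd E. x i - x j \<in> mat_ker (C (j, i))"
    and "x (last vs) = x (hd vs)"
  shows "\<forall>u\<in>fst E. \<forall>v\<in>fst E. x u = x v"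
proof -
  have vs: "distinct vs" "length vs \<ge> 2" "fst E = set vs" "snd E = path_arcs vs"
    using assms(1) unfolding is_dpath_list_def by auto
  have "(\<Sum>(j, i)\<in>snd E. x i - x j) = 0"
    using sum_path_arcs_telescope[OF vs(1,2), of x] assms(4) vs(4) by simp
  then have "\<forall>v\<in>fst E. x v = x (hd vs)"
    using constant_on_independent_arcs[OF _ assms(2,3)] vs(3,4) by (auto simp: finite_path_arcs)
  then show ?thesis by metis
qed

lemma ear_decomposition_constant:
  assumes ed: "ear_decomposition V A Es"
    and cycle: "\<And>E. E \<in> set Es \<Longrightarrow> is_dcycle E \<Longrightarrow> \<forall>u\<in>fst E. \<forall>v\<in>fst E. x u = x v"
    and path: "\<And>E vs. E \<in> set Es \<Longrightarrow> is_dpath_list E vs \<Longrightarrow> x (last vs) = x (hd vs) \<Longrightarrow>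
        \<forall>u\<in>fst E. \<forall>v\<in>fst E. x u = x v"
  shows "\<forall>u\<in>V. \<forall>v\<in>V. x u = x v"
proof -
  let ?earlier = "\<lambda>i. \<Union>k<i. fst (Es ! k)"
  have cyc0: "is_dcycle (Es ! 0)"
    and ear: "\<And>i. i < length Es \<Longrightarrow> i \<ge> 1 \<Longrightarrow> is_dpath (Es ! i) \<or> is_dcycle (Es ! i)"
    and V: "V = (\<Union>i<length Es. fst (Es ! i))"
    and attach_cycle: "\<And>i. i < length Es \<Longrightarrow> i \<ge> 1 \<Longrightarrow> is_dcycle (Es ! i) \<Longrightarrow>
        card (fst (Es ! i) \<inter> ?earlier i) = 1"
    and attach_path: "\<And>i vs. i < length Es \<Longrightarrow> i \<ge> 1 \<Longrightarrow> is_dpath_list (Es ! i) vs \<Longrightarrow>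
        fst (Es ! i) \<inter> ?earlier i = {hd vs, last vs}"
    using ed unfolding ear_decomposition_def by simp_all
  obtain vs0 where "length vs0 \<ge> 2" "fst (Es ! 0) = set vs0"
    using cyc0 unfolding is_dcycle_def by blast
  moreover from this(1) have "vs0 \<noteq> []"
    by auto
  ultimately have "hd vs0 \<in> fst (Es ! 0)"
    by simp
  then obtain w where w: "w \<in> fst (Es ! 0)" ..
  have "\<forall>v\<in>fst (Es ! i). x v = x w" if "i < length Es" for i
    using that
  proof (induction i rule: less_induct)
    case (less i)
    have Ei: "Es ! i \<in> set Es"
      using less.prems by simp
    have earlier: "x v = x w" if v: "v \<in> ?earlier i" for v
    proof -
      obtain k where "k < i" "v \<in> fst (Es ! k)"
        using v by blast
      with less.IH less.prems show ?thesis by simp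
    qed
    consider "i = 0" | "i \<ge> 1" "is_dcycle (Es ! i)" | vs where "i \<ge> 1" "is_dpath_list (Es ! i) vs"
      using ear[OF less.prems] unfolding is_dpath_def by fastforce
    then have "(\<forall>u\<in>fst (Es ! i). \<forall>v\<in>fst (Es ! i). x u = x v) \<and> (\<exists>u\<in>fst (Es ! i). x u = x w)"
    proof cases
      case 1
      then have "is_dcycle (Es ! i)" "w \<in> fst (Es ! i)"
        using cyc0 w by simp_all
      then show ?thesis
        using cycle[OF Ei] by blast
    next
      case 2
      obtain u where "u \<in> fst (Es ! i)" "u \<in> ?earlier i"
        using attach_cycle[OF less.prems 2] by (metis card_1_singletonE IntE insertI1)
      then show ?thesis
        using cycle[OF Ei 2(2)] earlier by blast
    next
      case (3 vs)
      have ends: "hd vs \<in> ?earlier i" "last vs \<in> ?earlier i" "hd vs \<in> fst (Es ! i)"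
        using attach_path[OF less.prems 3] by blast+
      then have "x (last vs) = x (hd vs)"
        using earlier by simp
      then show ?thesis
        using path[OF Ei 3(2)] ends earlier by blast
    qed
    then show ?case
      by metis
  qed
  then show ?thesis
    unfolding V by (metis UN_E lessThan_iff)
qed

theorem theorem1:
  fixes m :: nat and A :: "(nat \<times> nat) set"
    and C :: "nat \<times> nat \<Rightarrow> (real ^ 'n::finite) list"
    and Es :: "(nat set \<times> (nat \<times> nat) set) list"
  assumes "m \<ge> 2"
    and "A \<subseteq> {1..m} \<times> {1..m}"
    and "\<forall>(j, i) \<in> A. j \<noteq> i"
    and "strongly_connected {1..m} A"
    and "ear_decomposition {1..m} A Es"
    and "\<forall>E \<in> set Es. independent_family (snd E) (\<lambda>a. mat_ker (C a))"
  shows "well_configured m A C"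
  unfolding well_configured_def
proof (intro allI impI)
  fix x :: "nat \<Rightarrow> real ^ 'n"
  assume agree: "\<forall>(j, i) \<in> A. mat_apply (C (j, i)) (x i) = mat_apply (C (j, i)) (x j)"
  have A_eq: "A = (\<Union>k<length Es. snd (Es ! k))"
    using assms(5) unfolding ear_decomposition_def by simp
  have ker: "\<forall>(j, i)\<in>snd E. x i - x j \<in> mat_ker (C (j, i))" if E: "E \<in> set Es" for E
  proof -
    obtain k where "k < length Es" "Es ! k = E"
      using E by (auto simp: in_set_conv_nth)
    then have "snd E \<subseteq> A"
      unfolding A_eq by auto
    then show ?thesis
      using agree by (force intro: mat_apply_eq_imp_diff_in_mat_ker)
  qed
  show "\<forall>i\<in>{1..m}. \<forall>j\<in>{1..m}. x i = x j"
    using assms(5)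
  proof (rule ear_decomposition_constant)
    show "\<forall>u\<in>fst E. \<forall>v\<in>fst E. x u = x v" if "E \<in> set Es" "is_dcycle E" for E
      using constant_on_dcycle[OF that(2) _ ker[OF that(1)]] assms(6) that(1) by blast
    show "\<forall>u\<in>fst E. \<forall>v\<in>fst E. x u = x v"
      if "E \<in> set Es" "is_dpath_list E vs" "x (last vs) = x (hd vs)" for E vs
      using constant_on_dpath[OF that(2) _ ker[OF that(1)] that(3)] assms(6) that(1) by blast
  qed
qed

end
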